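(* Let $\bar{\mathcal{X}}=(\mathcal{G},\mathbf{U}_1,\mathbf{U}_2,\mathbf{U}_3)\in\mathcal{M}_r$ and $\eta=(\eta_{\mathcal{G}},\eta_1,\eta_2,\eta_3)\in T_{\bar{\mathcal{X}}}\mathcal{M}_r$. The linear system in skew-symmetric unknowns $\mathbf{\Omega}_i\in\mathbb{R}^{r_i\times r_i}$ ($\mathbf{\Omega}_i^\top=-\mathbf{\Omega}_i$), $i=1,2,3$, $$\mathrm{skw}(\mathbf{V}_i^\top\mathbf{V}_i\mathbf{\Omega}_i\mathbf{G}_i)+\mathrm{skw}(\mathbf{G}_i\mathbf{\Omega}_i)+\mathrm{skw}(\mathbf{W}_i^\top\mathbf{W}_i\mathbf{\Omega}_i\mathbf{G}_{\alpha_i})-\mathcal{G}_{(i)}\big(\mathbf{I}_{r_{j_i}}\otimes\mathbf{\Omega}_{k_i}+\mathbf{\Omega}_{j_i}\otimes\mathbf{I}_{r_{k_i}}\big)\mathcal{G}_{(i)}^\top=\mathrm{skw}\big(\mathbf{V}_i^\top\eta_i\mathbf{G}_i+\mathbf{W}_i^\top\eta_i\mathbf{G}_{\alpha_i}+\mathcal{G}_{(i)}(\eta_{\mathcal{G}})_{(i)}^\top\big),\quad i=1,2,3,$$ has a unique solution $(\mathbf{\Omega}_1,\mathbf{\Omega}_2,\mathbf{\Omega}_3)$, and the orthogonal projection (with respect to $\langle\cdot,\cdot\rangle_{\bar{\mathcal{X}}}$) of $\eta$ onto the horizontal space $\mathcal{H}_{\bar{\mathcal{X}}}$ is $$\Pi_{\bar{\mathcal{X}}}(\eta)=\Big(\eta_{\mathcal{G}}+\sum_{i=1}^3\mathcal{G}\times_i\mathbf{\Omega}_i,\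 \eta_1-\mathbf{U}_1\mathbf{\Omega}_1,\ \eta_2-\mathbf{U}_2\mathbf{\Omega}_2,\ \eta_3-\mathbf{U}_3\mathbf{\Omega}_3\Big).$$
   Context: Fix $1\le r_i\le n_i$, $k_i\ge r_i$, $N=n_1n_2n_3$, $\alpha_i>0$, $\mathbf{P}_i\in\mathbb{R}^{n_i\times k_i}$ with orthonormal columns. $\mathcal{X}_{(i)}$ is the mode-$i$ matricization and $\times_i$ the mode-$i$ product, with the convention $(\mathcal{G}\times_1\mathbf{A}_1\times_2\mathbf{A}_2\times_3\mathbf{A}_3)_{(i)}=\mathbf{A}_i\mathcal{G}_{(i)}(\mathbf{A}_{j_i}\otimes\mathbf{A}_{k_i})^\top$, where $j_i=\max(\{1,2,3\}\setminus\{i\})$, $k_i=\min(\{1,2,3\}\setminus\{i\})$, and $\otimes$ is the Kronecker product. Total space $\mathcal{M}_r=\{(\mathcal{G},\mathbf{U}_1,\mathbf{U}_2,\mathbf{U}_3):\mathcal{G}\in\mathbb{R}^{r_1\times r_2\times r_3},\ \mathrm{rank}\,\mathcal{G}_{(i)}=r_i,\ \mathbf{U}_i^\top\mathbf{U}_i=\mathbf{I}_{r_i}\}$, tangent space $T_{\bar{\mathcal{X}}}\mathcal{M}_r=\{(\eta_{\mathcal{G}},\eta_1,\eta_2,\eta_3):\mathbf{U}_i^\top\eta_i+\eta_i^\top\mathbf{U}_i=0\}$. Metric: $\langle\eta,\xi\rangle_{\bar{\mathcal{X}}}=\sum_i\langle\eta_i,\xi_i\mathcal{G}_{(i)}\mathcal{G}_{(i)}^\top\rangle+\langle\eta_{\mathcal{G}},\xi_{\mathcal{G}}\rangle+\sum_iN\alpha_i\langle\eta_i,(\mathbf{I}-\mathbf{P}_i\mathbf{P}_i^\top)\xi_i\rangle$.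 Vertical space $\mathcal{V}_{\bar{\mathcal{X}}}=\{(-\sum_{i=1}^3\mathcal{G}\times_i\mathbf{\Omega}_i,\mathbf{U}_1\mathbf{\Omega}_1,\mathbf{U}_2\mathbf{\Omega}_2,\mathbf{U}_3\mathbf{\Omega}_3):\mathbf{\Omega}_i^\top=-\mathbf{\Omega}_i\}$; horizontal space $\mathcal{H}_{\bar{\mathcal{X}}}$ = orthogonal complement of $\mathcal{V}_{\bar{\mathcal{X}}}$ in $T_{\bar{\mathcal{X}}}\mathcal{M}_r$ w.r.t. the metric. Notation: $\mathbf{V}_i=\mathbf{P}_i\mathbf{P}_i^\top\mathbf{U}_i$, $\mathbf{W}_i=\mathbf{U}_i-\mathbf{V}_i$, $\mathbf{G}_i=\mathcal{G}_{(i)}\mathcal{G}_{(i)}^\top$, $\mathbf{G}_{\alpha_i}=N\alpha_i\mathbf{I}+\mathcal{G}_{(i)}\mathcal{G}_{(i)}^\top$, $\mathrm{skw}(\mathbf{A})=(\mathbf{A}-\mathbf{A}^\top)/2$. *)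

theory Defs
  imports "HOL-Analysis.Analysis"
begin

text \<open>Kronecker products are indexed
by pairs, (A (x) B)[(i,k),(j,l)] = A[i,j] B[k,l]; the mode-i matricization has
columns indexed by pairs (a_{j_i}, a_{k_i}) with j_i = max, k_i = min of the other
two modes, consistent with the convention
(G x1 A1 x2 A2 x3 A3)_(i) = A_i G_(i) (A_{j_i} (x) A_{k_i})^T.\<close>

type_synonym ('a,'b,'c) tensor3 = "'a \<Rightarrow> 'b \<Rightarrow> 'c \<Rightarrow> real"

definition kron :: "(real^'b::finite^'a::finite) \<Rightarrow> (real^'d::finite^'c::finite) \<Rightarrow> real^('b \<times> 'd)^('a \<times> 'c)" where
  "kron A B = (\<chi> ik. \<chi> jl. A $ fst ik $ fst jl * B $ snd ik $ snd jl)"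

definition skw :: "(real^'n::finite^'n) \<Rightarrow> (real^'n^'n)" where
  "skw A = (1/2) *\<^sub>R (A - transpose A)"

definition frob :: "(real^'c::finite^'r::finite) \<Rightarrow> (real^'c^'r) \<Rightarrow> real" where
  "frob A B = (\<Sum>i\<in>UNIV. \<Sum>j\<in>UNIV. A $ i $ j * B $ i $ j)"

definition tinner :: "('a::finite,'b::finite,'c::finite) tensor3 \<Rightarrow> ('a,'b,'c) tensor3 \<Rightarrow> real" where
  "tinner S T = (\<Sum>a\<in>UNIV. \<Sum>b\<in>UNIV. \<Sum>c\<in>UNIV. S a b c * T a b c)"

definition unf1 :: "('a::finite,'b::finite,'c::finite) tensor3 \<Rightarrow> real^('c \<times> 'b)^'a" where
  "unf1 G = (\<chi> a. \<chi> cb. G a (snd cb) (fst cb))"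
definition unf2 :: "('a::finite,'b::finite,'c::finite) tensor3 \<Rightarrow> real^('c \<times> 'a)^'b" where
  "unf2 G = (\<chi> b. \<chi> ca. G (snd ca) b (fst ca))"
definition unf3 :: "('a::finite,'b::finite,'c::finite) tensor3 \<Rightarrow> real^('b \<times> 'a)^'c" where
  "unf3 G = (\<chi> c. \<chi> ba. G (snd ba) (fst ba) c)"

definition mprod1 :: "('a::finite,'b,'c) tensor3 \<Rightarrow> (real^'a^'m::finite) \<Rightarrow> ('m,'b,'c) tensor3" where
  "mprod1 G A = (\<lambda>x b c. \<Sum>a\<in>UNIV. A $ x $ a * G a b c)"
definition mprod2 :: "('a,'b::finite,'c) tensor3 \<Rightarrow> (real^'b^'m::finite) \<Rightarrow> ('a,'m,'c) tensor3" where
  "mprod2 G A = (\<lambda>a x c. \<Sum>b\<in>UNIV. A $ x $ b * G a b c)"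
definition mprod3 :: "('a,'b,'c::finite) tensor3 \<Rightarrow> (real^'c^'m::finite) \<Rightarrow> ('a,'b,'m) tensor3" where
  "mprod3 G A = (\<lambda>a b x. \<Sum>c\<in>UNIV. A $ x $ c * G a b c)"

definition skew_mat :: "(real^'n::finite^'n) \<Rightarrow> bool" where
  "skew_mat A \<longleftrightarrow> transpose A = - A"

definition in_Mr ::
  "('r1::finite,'r2::finite,'r3::finite) tensor3 \<times> (real^'r1^'n1::finite) \<times> (real^'r2^'n2::finite) \<times> (real^'r3^'n3::finite) \<Rightarrow> bool" where
  "in_Mr X = (case X of (G,U1,U2,U3) \<Rightarrow>
     rank (unf1 G) = CARD('r1) \<and> rank (unf2 G) = CARD('r2) \<and> rank (unf3 G) = CARD('r3) \<and>
     transpose U1 ** U1 = mat 1 \<and> transpose U2 ** U2 = mat 1 \<and> transpose U3 ** U3 = mat 1)"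

definition tangent_space ::
  "('r1::finite,'r2::finite,'r3::finite) tensor3 \<times> (real^'r1^'n1::finite) \<times> (real^'r2^'n2::finite) \<times> (real^'r3^'n3::finite) \<Rightarrow>
   (('r1,'r2,'r3) tensor3 \<times> (real^'r1^'n1) \<times> (real^'r2^'n2) \<times> (real^'r3^'n3)) set" where
  "tangent_space X = (case X of (G,U1,U2,U3) \<Rightarrow>
     {(eG,e1,e2,e3). transpose U1 ** e1 + transpose e1 ** U1 = 0 \<and>
                     transpose U2 ** e2 + transpose e2 ** U2 = 0 \<and>
                     transpose U3 ** e3 + transpose e3 ** U3 = 0})"

definition metric ::
  "(real^'k1::finite^'n1) \<times> (real^'k2::finite^'n2) \<times> (real^'k3::finite^'n3) \<Rightarrow> real \<times> real \<times> real \<Rightarrow>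
   ('r1::finite,'r2::finite,'r3::finite) tensor3 \<times> (real^'r1^'n1::finite) \<times> (real^'r2^'n2::finite) \<times> (real^'r3^'n3::finite) \<Rightarrow>
   ('r1,'r2,'r3) tensor3 \<times> (real^'r1^'n1) \<times> (real^'r2^'n2) \<times> (real^'r3^'n3) \<Rightarrow>
   ('r1,'r2,'r3) tensor3 \<times> (real^'r1^'n1) \<times> (real^'r2^'n2) \<times> (real^'r3^'n3) \<Rightarrow> real" where
  "metric P al X eta xi = (case P of (P1,P2,P3) \<Rightarrow> case al of (a1,a2,a3) \<Rightarrow>
     case X of (G,U1,U2,U3) \<Rightarrow> case eta of (eG,e1,e2,e3) \<Rightarrow> case xi of (xG,x1,x2,x3) \<Rightarrow>
     let N = real (CARD('n1) * CARD('n2) * CARD('n3)) in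
       frob e1 (x1 ** (unf1 G ** transpose (unf1 G)))
     + frob e2 (x2 ** (unf2 G ** transpose (unf2 G)))
     + frob e3 (x3 ** (unf3 G ** transpose (unf3 G)))
     + tinner eG xG
     + N * a1 * frob e1 ((mat 1 - P1 ** transpose P1) ** x1)
     + N * a2 * frob e2 ((mat 1 - P2 ** transpose P2) ** x2)
     + N * a3 * frob e3 ((mat 1 - P3 ** transpose P3) ** x3))"

definition vertical_space ::
  "('r1::finite,'r2::finite,'r3::finite) tensor3 \<times> (real^'r1^'n1::finite) \<times> (real^'r2^'n2::finite) \<times> (real^'r3^'n3::finite) \<Rightarrow>
   (('r1,'r2,'r3) tensor3 \<times> (real^'r1^'n1) \<times> (real^'r2^'n2) \<times> (real^'r3^'n3)) set" where
  "vertical_space X = (case X of (G,U1,U2,U3) \<Rightarrow>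
     {((\<lambda>a b c. - (mprod1 G O1 a b c + mprod2 G O2 a b c + mprod3 G O3 a b c)),
        U1 ** O1, U2 ** O2, U3 ** O3) | O1 O2 O3.
        skew_mat O1 \<and> skew_mat O2 \<and> skew_mat O3})"

definition horizontal_space where
  "horizontal_space P al X =
     {xi \<in> tangent_space X. \<forall>v \<in> vertical_space X. metric P al X v xi = 0}"

definition tdiff ::
  "('r1,'r2,'r3) tensor3 \<times> (real^'r1::finite^'n1::finite) \<times> (real^'r2::finite^'n2::finite) \<times> (real^'r3::finite^'n3::finite) \<Rightarrow>
   ('r1,'r2,'r3) tensor3 \<times> (real^'r1^'n1) \<times> (real^'r2^'n2) \<times> (real^'r3^'n3) \<Rightarrow>
   ('r1,'r2,'r3) tensor3 \<times> (real^'r1^'n1) \<times> (real^'r2^'n2) \<times> (real^'r3^'n3)" where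
  "tdiff eta xi = (case eta of (eG,e1,e2,e3) \<Rightarrow> case xi of (xG,x1,x2,x3) \<Rightarrow>
     ((\<lambda>a b c. eG a b c - xG a b c), e1 - x1, e2 - x2, e3 - x3))"

definition horizontal_proj where
  "horizontal_proj P al X eta =
     (THE p. p \<in> horizontal_space P al X \<and>
             (\<forall>xi \<in> horizontal_space P al X. metric P al X (tdiff eta p) xi = 0))"

text \<open>The i-th equation of the linear system, written generically:
Gi is the mode-i matricization of G, Ui, Pm, ei the i-th factor data,
eGi the mode-i matricization of eta_G, Oi the unknown,
Oj, Ok the unknowns of modes j_i and k_i; N and a the weights.\<close>
definition sys_eq ::
  "real^('j::finite \<times> 'k::finite)^'r::finite \<Rightarrow> (real^'r^'n::finite) \<Rightarrow> (real^'kk::finite^'n) \<Rightarrow> (real^'r^'n) \<Rightarrow> real^('j \<times> 'k)^'r \<Rightarrow>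
   real \<Rightarrow> real \<Rightarrow> (real^'r^'r) \<Rightarrow> (real^'j^'j) \<Rightarrow> (real^'k^'k) \<Rightarrow> bool" where
  "sys_eq Gi Ui Pm ei eGi N a Oi Oj Ok =
     (let V = Pm ** transpose Pm ** Ui; W = Ui - V;
          GG = Gi ** transpose Gi; Ga = (N * a) *\<^sub>R mat 1 + Gi ** transpose Gi in
      skw (transpose V ** V ** Oi ** GG) + skw (GG ** Oi) + skw (transpose W ** W ** Oi ** Ga)
        - Gi ** (kron (mat 1) Ok + kron Oj (mat 1)) ** transpose Gi
      = skw (transpose V ** ei ** GG + transpose W ** ei ** Ga + Gi ** transpose eGi))"

definition lin_system ::
  "(real^'k1::finite^'n1) \<times> (real^'k2::finite^'n2) \<times> (real^'k3::finite^'n3) \<Rightarrow> real \<times> real \<times> real \<Rightarrow>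
   ('r1::finite,'r2::finite,'r3::finite) tensor3 \<times> (real^'r1^'n1::finite) \<times> (real^'r2^'n2::finite) \<times> (real^'r3^'n3::finite) \<Rightarrow>
   ('r1,'r2,'r3) tensor3 \<times> (real^'r1^'n1) \<times> (real^'r2^'n2) \<times> (real^'r3^'n3) \<Rightarrow>
   (real^'r1^'r1) \<Rightarrow> (real^'r2^'r2) \<Rightarrow> (real^'r3^'r3) \<Rightarrow> bool" where
  "lin_system P al X eta O1 O2 O3 = (case P of (P1,P2,P3) \<Rightarrow> case al of (a1,a2,a3) \<Rightarrow>
     case X of (G,U1,U2,U3) \<Rightarrow> case eta of (eG,e1,e2,e3) \<Rightarrow>
     let N = real (CARD('n1) * CARD('n2) * CARD('n3)) in
     skew_mat O1 \<and> skew_mat O2 \<and> skew_mat O3 \<and>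
     sys_eq (unf1 G) U1 P1 e1 (unf1 eG) N a1 O1 O3 O2 \<and>
     sys_eq (unf2 G) U2 P2 e2 (unf2 eG) N a2 O2 O3 O1 \<and>
     sys_eq (unf3 G) U3 P3 e3 (unf3 eG) N a3 O3 O2 O1)"

end

theory Submission
  imports Defs
begin

text \<open>
  Pairing a vertical vector \<open>v(\<Omega>)\<close> with a tangent vector \<open>\<xi>\<close> in the metric and moving every
  factor across the Frobenius inner product gives \<open>\<Omega> \<bullet> D(\<xi>)\<close> for an explicit triple of matrices
  \<open>D(\<xi>)\<close>; as \<open>\<Omega>\<close> is skew, only the skew part of \<open>D(\<xi>)\<close> matters.  For \<open>\<xi> = \<eta>\<close> this skew part is
  the right-hand side of the linear system, for \<open>\<xi> = v(\<Omega>)\<close> it is the left-hand side.  Hence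
  \<open>\<eta> - v(\<Omega>)\<close> is horizontal exactly when \<open>\<Omega>\<close> solves the system.

  The metric is positive definite (the matricizations of \<open>G\<close> have full row rank and \<open>\<alpha>\<^sub>i > 0\<close>).
  So the left-hand side, a linear endomorphism of the space of skew triples, is injective: it
  vanishing at \<open>\<Omega>\<close> forces \<open>\<langle>v(\<Omega>), v(\<Omega>)\<rangle> = 0\<close>.  Hence it is bijective, the system has a unique
  solution, and by definiteness the orthogonal projection is \<open>\<eta> - v(\<Omega>)\<close>.
\<close>

section \<open>Matrix algebra and the Frobenius inner product\<close>

lemma matrix_add_rdistrib: "((A::real^'n::finite^'m) + B) ** (C::real^'p::finite^'n) = A ** C + B ** C"
  by (simp add: matrix_matrix_mult_def vec_eq_iff sum.distrib distrib_right)
lemma matrix_diff_ldistrib: "(A::real^'n::finite^'m) ** ((B::real^'p::finite^'n) - C) = A ** B - A ** C"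
  by (simp add: matrix_matrix_mult_def vec_eq_iff sum_subtractf right_diff_distrib)
lemma matrix_diff_rdistrib: "((A::real^'n::finite^'m) - B) ** (C::real^'p::finite^'n) = A ** C - B ** C"
  by (simp add: matrix_matrix_mult_def vec_eq_iff sum_subtractf left_diff_distrib)
lemma matrix_neg_left: "(- (A::real^'n::finite^'m)) ** (C::real^'p::finite^'n) = - (A ** C)"
  by (simp add: matrix_matrix_mult_def vec_eq_iff sum_negf)
lemma matrix_neg_right: "(A::real^'n::finite^'m) ** (- (C::real^'p::finite^'n)) = - (A ** C)"
  by (simp add: matrix_matrix_mult_def vec_eq_iff sum_negf)
lemma matrix_scaleR_left: "(k *\<^sub>R (A::real^'n::finite^'m)) ** (C::real^'p::finite^'n) = k *\<^sub>R (A ** C)"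
  by (simp add: matrix_matrix_mult_def vec_eq_iff sum_distrib_left mult_ac)
lemma matrix_scaleR_right: "(A::real^'n::finite^'m) ** (k *\<^sub>R (C::real^'p::finite^'n)) = k *\<^sub>R (A ** C)"
  by (simp add: matrix_matrix_mult_def vec_eq_iff sum_distrib_left mult_ac)
lemma transpose_add: "transpose ((A::real^'n^'m) + B) = transpose A + transpose B"
  by (simp add: transpose_def vec_eq_iff)
lemma transpose_diff: "transpose ((A::real^'n^'m) - B) = transpose A - transpose B"
  by (simp add: transpose_def vec_eq_iff)
lemma transpose_uminus: "transpose (- (A::real^'n^'m)) = - transpose A"
  by (simp add: transpose_def vec_eq_iff)

lemmas matrix_algebra_simps = matrix_add_ldistrib matrix_add_rdistrib matrix_diff_ldistrib
  matrix_diff_rdistrib matrix_neg_left matrix_neg_right matrix_scaleR_left matrix_scaleR_right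
  transpose_add transpose_diff transpose_uminus transpose_scalar matrix_transpose_mul

lemma matrix_mul_cancel_orthonormal:
  "transpose P ** P = mat 1 \<Longrightarrow> A ** transpose P ** P = A"
  by (metis matrix_mul_assoc matrix_mul_rid)

lemma sum_reverse_nested3:
  "(\<Sum>i\<in>A. \<Sum>j\<in>B. \<Sum>k\<in>C. f i j k) = (\<Sum>k\<in>C. \<Sum>j\<in>B. \<Sum>i\<in>A. f i j k)"
proof -
  have "(\<Sum>i\<in>A. \<Sum>j\<in>B. \<Sum>k\<in>C. f i j k) = (\<Sum>i\<in>A. \<Sum>k\<in>C. \<Sum>j\<in>B. f i j k)"
    by (rule sum.cong[OF refl], rule sum.swap)
  also have "\<dots> = (\<Sum>k\<in>C. \<Sum>i\<in>A. \<Sum>j\<in>B. f i j k)"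
    by (rule sum.swap)
  also have "\<dots> = (\<Sum>k\<in>C. \<Sum>j\<in>B. \<Sum>i\<in>A. f i j k)"
    by (rule sum.cong[OF refl], rule sum.swap)
  finally show ?thesis .
qed

lemma frob_eq_inner: "frob A B = A \<bullet> B"
  by (simp add: frob_def inner_vec_def)

lemma inner_matrix_mult_left: "((A::real^'n::finite^'m::finite) ** (B::real^'p::finite^'n)) \<bullet> C = B \<bullet> (transpose A ** C)"
proof -
  have "(A ** B) \<bullet> C = (\<Sum>i\<in>UNIV. \<Sum>j\<in>UNIV. \<Sum>k\<in>UNIV. A$i$k * B$k$j * C$i$j)"
    by (simp add: inner_vec_def matrix_matrix_mult_def sum_distrib_right)
  also have "\<dots> = (\<Sum>k\<in>UNIV. \<Sum>j\<in>UNIV. \<Sum>i\<in>UNIV. A$i$k * B$k$j * C$i$j)"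
    by (rule sum_reverse_nested3)
  also have "\<dots> = B \<bullet> (transpose A ** C)"
    by (simp add: inner_vec_def matrix_matrix_mult_def transpose_def sum_distrib_left mult_ac)
  finally show ?thesis .
qed

lemma inner_transpose: "transpose (A::real^'n::finite^'m::finite) \<bullet> transpose B = A \<bullet> B"
  unfolding inner_vec_def transpose_def by (simp, rule sum.swap)

lemma inner_matrix_mult_right:
  "((A::real^'n::finite^'m::finite) ** (B::real^'p::finite^'n)) \<bullet> C = A \<bullet> (C ** transpose B)"
proof -
  have "(A ** B) \<bullet> C = (transpose B ** transpose A) \<bullet> transpose C"
    by (metis inner_transpose matrix_transpose_mul)
  also have "\<dots> = transpose A \<bullet> (B ** transpose C)"
    by (simp add: inner_matrix_mult_left)
  also have "\<dots> = A \<bullet> (C ** transpose B)"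
    by (metis inner_transpose matrix_transpose_mul transpose_transpose)
  finally show ?thesis .
qed

lemma linear_inj_on_subspace_imp_surj_on:
  fixes f :: "'a::euclidean_space \<Rightarrow> 'a"
  assumes "linear f" and "subspace S" and "f ` S \<subseteq> S" and "inj_on f S"
  shows "f ` S = S"
proof (rule subspace_dim_equal)
  show "subspace (f ` S)"
    using assms by (simp add: linear_subspace_image)
  have "span S = S"
    using assms(2) by (rule span_eq_iff[THEN iffD2])
  then show "dim S \<le> dim (f ` S)"
    using assms dim_image_eq[of f S] by (metis order_refl)
qed (use assms in auto)

section \<open>Skew parts and Kronecker products\<close>

lemma skw_add: "skw (A + B) = skw A + skw B"
  by (simp add: skw_def transpose_add algebra_simps)
lemma skw_diff: "skw (A - B) = skw A - skw B"
  by (simp add: skw_def transpose_diff algebra_simps)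
lemma skw_uminus: "skw (- A) = - skw A"
  by (simp add: skw_def transpose_uminus algebra_simps)
lemma skw_scaleR: "skw (k *\<^sub>R A) = k *\<^sub>R skw A"
  by (simp add: skw_def transpose_scalar algebra_simps)
lemma skw_transpose: "skw (transpose A) = - skw A"
  by (simp add: skw_def algebra_simps)
lemma transpose_skw: "transpose (skw A) = - skw A"
  by (simp add: skw_def transpose_scalar transpose_diff algebra_simps)
lemma skew_mat_skw: "skew_mat (skw A)"
  by (simp add: skew_mat_def transpose_skw)
lemma skw_eq_self: "skew_mat A \<Longrightarrow> skw A = A"
  by (simp add: skew_mat_def skw_def scaleR_2[symmetric])
lemma skw_symmetric: "transpose A = A \<Longrightarrow> skw A = 0"
  by (simp add: skw_def)

lemma inner_skew_skw:
  assumes "skew_mat S"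
  shows "S \<bullet> A = S \<bullet> skw A"
proof -
  have "S \<bullet> transpose A = - (S \<bullet> A)"
    using assms inner_transpose[of S "transpose A"] by (simp add: skew_mat_def)
  then show ?thesis
    by (simp add: skw_def inner_diff_right)
qed

lemma transpose_kron: "transpose (kron A B) = kron (transpose A) (transpose B)"
  by (simp add: kron_def transpose_def vec_eq_iff)
lemma kron_add_left: "kron (A + B) C = kron A C + kron B C"
  by (simp add: kron_def vec_eq_iff distrib_right)
lemma kron_add_right: "kron A (B + C) = kron A B + kron A C"
  by (simp add: kron_def vec_eq_iff distrib_left)
lemma kron_scaleR_left: "kron (k *\<^sub>R A) B = k *\<^sub>R kron A B"
  by (simp add: kron_def vec_eq_iff mult_ac)
lemma kron_scaleR_right: "kron A (k *\<^sub>R B) = k *\<^sub>R kron A B"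
  by (simp add: kron_def vec_eq_iff mult_ac)
lemma kron_uminus_left: "kron (- A) B = - kron A B"
  by (simp add: kron_def vec_eq_iff)
lemma kron_uminus_right: "kron A (- B) = - kron A B"
  by (simp add: kron_def vec_eq_iff)

lemma sum_UNIV_prod:
  "(\<Sum>p\<in>(UNIV::('a::finite \<times> 'b::finite) set). f p) = (\<Sum>x\<in>UNIV. \<Sum>y\<in>UNIV. f (x, y))"
  by (simp add: sum.cartesian_product)

lemma sum_delta_nested:
  "(\<Sum>x\<in>(UNIV::'a::finite set). \<Sum>y\<in>(UNIV::'b::finite set). if a = x then g x y else 0) = (\<Sum>y\<in>UNIV. g a y)"
proof -
  have "(\<Sum>y\<in>(UNIV::'b set). if a = x then g x y else 0) = (if a = x then \<Sum>y\<in>UNIV. g x y else 0)" for x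
    by simp
  then show ?thesis by (simp add: sum.delta)
qed

section \<open>Matricizations and mode products\<close>

lemma unf1_mprod1: "unf1 (mprod1 G A) = A ** unf1 G"
  by (simp add: unf1_def mprod1_def matrix_matrix_mult_def vec_eq_iff)
lemma unf2_mprod2: "unf2 (mprod2 G A) = A ** unf2 G"
  by (simp add: unf2_def mprod2_def matrix_matrix_mult_def vec_eq_iff)
lemma unf3_mprod3: "unf3 (mprod3 G A) = A ** unf3 G"
  by (simp add: unf3_def mprod3_def matrix_matrix_mult_def vec_eq_iff)

lemmas unf_mprod_simps = matrix_matrix_mult_def vec_eq_iff kron_def transpose_def mat_def
  sum_UNIV_prod if_distrib if_distribR sum.delta' sum_delta_nested mult_ac

lemma unf1_mprod2: "unf1 (mprod2 G A) = unf1 G ** transpose (kron (mat 1) A)"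
  by (simp add: unf1_def mprod2_def unf_mprod_simps cong: if_cong)
lemma unf1_mprod3: "unf1 (mprod3 G A) = unf1 G ** transpose (kron A (mat 1))"
  by (simp add: unf1_def mprod3_def unf_mprod_simps cong: if_cong)
lemma unf2_mprod1: "unf2 (mprod1 G A) = unf2 G ** transpose (kron (mat 1) A)"
  by (simp add: unf2_def mprod1_def unf_mprod_simps cong: if_cong)
lemma unf2_mprod3: "unf2 (mprod3 G A) = unf2 G ** transpose (kron A (mat 1))"
  by (simp add: unf2_def mprod3_def unf_mprod_simps cong: if_cong)
lemma unf3_mprod1: "unf3 (mprod1 G A) = unf3 G ** transpose (kron (mat 1) A)"
  by (simp add: unf3_def mprod1_def unf_mprod_simps cong: if_cong)
lemma unf3_mprod2: "unf3 (mprod2 G A) = unf3 G ** transpose (kron A (mat 1))"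
  by (simp add: unf3_def mprod2_def unf_mprod_simps cong: if_cong)

lemma unf1_add: "unf1 (\<lambda>a b c. S a b c + T a b c) = unf1 S + unf1 T"
  by (simp add: unf1_def vec_eq_iff)
lemma unf2_add: "unf2 (\<lambda>a b c. S a b c + T a b c) = unf2 S + unf2 T"
  by (simp add: unf2_def vec_eq_iff)
lemma unf3_add: "unf3 (\<lambda>a b c. S a b c + T a b c) = unf3 S + unf3 T"
  by (simp add: unf3_def vec_eq_iff)
lemma unf1_diff: "unf1 (\<lambda>a b c. S a b c - T a b c) = unf1 S - unf1 T"
  by (simp add: unf1_def vec_eq_iff)
lemma unf2_diff: "unf2 (\<lambda>a b c. S a b c - T a b c) = unf2 S - unf2 T"
  by (simp add: unf2_def vec_eq_iff)
lemma unf3_diff: "unf3 (\<lambda>a b c. S a b c - T a b c) = unf3 S - unf3 T"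
  by (simp add: unf3_def vec_eq_iff)
lemma unf1_uminus: "unf1 (\<lambda>a b c. - S a b c) = - unf1 S"
  by (simp add: unf1_def vec_eq_iff)
lemma unf2_uminus: "unf2 (\<lambda>a b c. - S a b c) = - unf2 S"
  by (simp add: unf2_def vec_eq_iff)
lemma unf3_uminus: "unf3 (\<lambda>a b c. - S a b c) = - unf3 S"
  by (simp add: unf3_def vec_eq_iff)

lemma tinner_eq_inner_unf1: "tinner S T = unf1 S \<bullet> unf1 T"
  unfolding tinner_def inner_vec_def unf1_def
  by (simp add: sum_UNIV_prod, rule sum.cong[OF refl], rule sum.swap)
lemma tinner_eq_inner_unf2: "tinner S T = unf2 S \<bullet> unf2 T"
proof -
  have "tinner S T = (\<Sum>b\<in>UNIV. \<Sum>a\<in>UNIV. \<Sum>c\<in>UNIV. S a b c * T a b c)"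
    unfolding tinner_def by (rule sum.swap)
  also have "\<dots> = (\<Sum>b\<in>UNIV. \<Sum>c\<in>UNIV. \<Sum>a\<in>UNIV. S a b c * T a b c)"
    by (rule sum.cong[OF refl], rule sum.swap)
  finally show ?thesis by (simp add: inner_vec_def unf2_def sum_UNIV_prod)
qed
lemma tinner_eq_inner_unf3: "tinner S T = unf3 S \<bullet> unf3 T"
proof -
  have "tinner S T = (\<Sum>c\<in>UNIV. \<Sum>b\<in>UNIV. \<Sum>a\<in>UNIV. S a b c * T a b c)"
    unfolding tinner_def by (rule sum_reverse_nested3)
  then show ?thesis by (simp add: inner_vec_def unf3_def sum_UNIV_prod)
qed

lemma tinner_mprod1: "tinner (mprod1 G A) T = A \<bullet> (unf1 T ** transpose (unf1 G))"
  by (simp add: tinner_eq_inner_unf1 unf1_mprod1 inner_matrix_mult_right)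
lemma tinner_mprod2: "tinner (mprod2 G A) T = A \<bullet> (unf2 T ** transpose (unf2 G))"
  by (simp add: tinner_eq_inner_unf2 unf2_mprod2 inner_matrix_mult_right)
lemma tinner_mprod3: "tinner (mprod3 G A) T = A \<bullet> (unf3 T ** transpose (unf3 G))"
  by (simp add: tinner_eq_inner_unf3 unf3_mprod3 inner_matrix_mult_right)

lemma tinner_add_left: "tinner (\<lambda>a b c. S a b c + T a b c) R = tinner S R + tinner T R"
  by (simp add: tinner_def distrib_right sum.distrib)
lemma tinner_uminus_left: "tinner (\<lambda>a b c. - S a b c) R = - tinner S R"
  by (simp add: tinner_def sum_negf)
lemma tinner_diff_left: "tinner (\<lambda>a b c. S a b c - T a b c) R = tinner S R - tinner T R"
  by (simp add: tinner_def left_diff_distrib sum_subtractf)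
lemma tinner_diff_right: "tinner R (\<lambda>a b c. S a b c - T a b c) = tinner R S - tinner R T"
  by (simp add: tinner_def right_diff_distrib sum_subtractf)

section \<open>One mode of the linear system\<close>

text \<open>\<open>Om \<bullet> mode_dual U P c Gi x xGi\<close> is the mode-i part of the metric between the vertical vector
  of \<open>Om\<close> and a tangent vector with factor \<open>x\<close> and core matricization \<open>xGi\<close>; the middle term is
  \<open>c (I - P P\<^sup>T) x\<close> with \<open>U\<close> moved across the inner product.\<close>

definition mode_dual ::
  "real^'r::finite^'n::finite \<Rightarrow> real^'k::finite^'n \<Rightarrow> real \<Rightarrow> real^'c::finite^'r \<Rightarrow> real^'r^'n \<Rightarrow> real^'c^'r
   \<Rightarrow> real^'r^'r" where
  "mode_dual U P c Gi x xGi = transpose U ** x ** (Gi ** transpose Gi)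
      + c *\<^sub>R (transpose (U - P ** transpose P ** U) ** x) - xGi ** transpose Gi"

definition mode_lhs ::
  "real^('j::finite \<times> 'k::finite)^'r::finite \<Rightarrow> real^'r^'n::finite \<Rightarrow> real^'kk::finite^'n \<Rightarrow> real \<Rightarrow> real
   \<Rightarrow> real^'r^'r \<Rightarrow> real^'j^'j \<Rightarrow> real^'k^'k \<Rightarrow> real^'r^'r" where
  "mode_lhs Gi U P N a Oi Oj Ok =
     skw (transpose (P ** transpose P ** U) ** (P ** transpose P ** U) ** Oi ** (Gi ** transpose Gi))
     + skw ((Gi ** transpose Gi) ** Oi)
     + skw (transpose (U - P ** transpose P ** U) ** (U - P ** transpose P ** U) ** Oi
              ** ((N * a) *\<^sub>R mat 1 + Gi ** transpose Gi))
     - Gi ** (kron (mat 1) Ok + kron Oj (mat 1)) ** transpose Gi"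

definition mode_rhs ::
  "real^('j::finite \<times> 'k::finite)^'r::finite \<Rightarrow> real^'r^'n::finite \<Rightarrow> real^'kk::finite^'n \<Rightarrow> real^'r^'n
   \<Rightarrow> real^('j \<times> 'k)^'r \<Rightarrow> real \<Rightarrow> real \<Rightarrow> real^'r^'r" where
  "mode_rhs Gi U P e eGi N a =
     skw (transpose (P ** transpose P ** U) ** e ** (Gi ** transpose Gi)
        + transpose (U - P ** transpose P ** U) ** e ** ((N * a) *\<^sub>R mat 1 + Gi ** transpose Gi)
        + Gi ** transpose eGi)"

lemma sys_eq_iff_mode_lhs_eq_mode_rhs:
  "sys_eq Gi U P e eGi N a Oi Oj Ok \<longleftrightarrow> mode_lhs Gi U P N a Oi Oj Ok = mode_rhs Gi U P e eGi N a"
  by (simp add: sys_eq_def mode_lhs_def mode_rhs_def Let_def)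

lemma inner_mode_dual:
  "(U ** Om) \<bullet> (x ** (Gi ** transpose Gi)) + c * ((U ** Om) \<bullet> ((mat 1 - P ** transpose P) ** x))
     - Om \<bullet> (xGi ** transpose Gi) = Om \<bullet> mode_dual U P c Gi x xGi"
  by (simp add: mode_dual_def inner_matrix_mult_left inner_add_right inner_diff_right
      matrix_algebra_simps matrix_mul_assoc)

lemma mode_dual_diff:
  "mode_dual U P c Gi (x - y) (xGi - yGi) = mode_dual U P c Gi x xGi - mode_dual U P c Gi y yGi"
  by (simp add: mode_dual_def matrix_algebra_simps algebra_simps)

lemma skw_mode_dual_eq_mode_rhs: "skw (mode_dual U P (N * a) Gi e eGi) = mode_rhs Gi U P e eGi N a"
proof -
  let ?S = "eGi ** transpose Gi + transpose (eGi ** transpose Gi)"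
  have "transpose (P ** transpose P ** U) ** e ** (Gi ** transpose Gi)
        + transpose (U - P ** transpose P ** U) ** e ** ((N * a) *\<^sub>R mat 1 + Gi ** transpose Gi)
        + Gi ** transpose eGi = mode_dual U P (N * a) Gi e eGi + ?S"
    by (simp add: mode_dual_def matrix_algebra_simps algebra_simps)
  moreover have "skw ?S = 0"
    by (rule skw_symmetric) (simp add: transpose_add add.commute)
  ultimately show ?thesis
    by (simp add: mode_rhs_def skw_add)
qed

lemma transpose_orthonormal_split:
  fixes U :: "real^'r::finite^'n::finite" and P :: "real^'k::finite^'n"
  assumes "transpose U ** U = mat 1" and "transpose P ** P = mat 1"
  defines "V \<equiv> P ** transpose P ** U" and "W \<equiv> U - P ** transpose P ** U"
  shows "transpose V ** V + transpose W ** W = mat 1" and "transpose W ** U = transpose W ** W"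
  unfolding V_def W_def
  by (simp_all add: matrix_algebra_simps matrix_mul_assoc matrix_mul_cancel_orthonormal assms)

lemma skw_mult_gram_commute:
  assumes "skew_mat Om"
  shows "skw ((Gi ** transpose Gi) ** Om) = skw (Om ** (Gi ** transpose Gi))"
proof -
  have "transpose (Om ** (Gi ** transpose Gi)) = - ((Gi ** transpose Gi) ** Om)"
    using assms by (simp add: skew_mat_def matrix_algebra_simps matrix_mul_assoc)
  then have "skw (- ((Gi ** transpose Gi) ** Om)) = - skw (Om ** (Gi ** transpose Gi))"
    by (metis skw_transpose)
  then show ?thesis
    by (simp add: skw_uminus)
qed

text \<open>The terms of the left-hand side weighted by \<open>V\<^sup>T V\<close> and \<open>W\<^sup>T W\<close> recombine because
  \<open>V\<^sup>T V + W\<^sup>T W = U\<^sup>T U = I\<close>.\<close>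

lemma skw_mode_dual_vertical:
  fixes U :: "real^'r::finite^'n::finite" and P :: "real^'kk::finite^'n"
    and Gi :: "real^('j::finite \<times> 'k::finite)^'r"
  assumes U: "transpose U ** U = mat 1" and P: "transpose P ** P = mat 1"
    and Oi: "skew_mat Oi" and Oj: "skew_mat Oj" and Ok: "skew_mat Ok"
  shows "skw (mode_dual U P (N * a) Gi (U ** Oi)
            (- (Oi ** Gi + Gi ** transpose (kron (mat 1) Ok + kron Oj (mat 1)))))
         = mode_lhs Gi U P N a Oi Oj Ok"
proof -
  define V where "V = P ** transpose P ** U"
  define W where "W = U - V"
  define GG where "GG = Gi ** transpose Gi"
  define K where "K = kron (mat 1) Ok + kron Oj (mat 1)"
  have VW: "transpose V ** V + transpose W ** W = mat 1" and WU: "transpose W ** U = transpose W ** W"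
    using transpose_orthonormal_split[OF U P] by (simp_all add: W_def V_def)
  have K: "transpose K = - K"
    using Oj Ok by (simp add: K_def skew_mat_def transpose_add transpose_kron kron_uminus_left kron_uminus_right)
  have GKG: "skw (Gi ** K ** transpose Gi) = Gi ** K ** transpose Gi"
    using K by (intro skw_eq_self) (simp add: skew_mat_def matrix_algebra_simps matrix_mul_assoc)
  have UU: "transpose U ** (U ** Oi) ** GG = Oi ** GG"
    by (simp add: matrix_mul_assoc U)
  have WU': "transpose W ** (U ** Oi) = transpose W ** W ** Oi"
    by (simp add: matrix_mul_assoc WU)
  have GKG': "- (Oi ** Gi + Gi ** transpose K) ** transpose Gi = - (Oi ** GG) + Gi ** K ** transpose Gi"
    by (simp add: GG_def K matrix_algebra_simps matrix_mul_assoc)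
  have dual: "mode_dual U P (N * a) Gi (U ** Oi) (- (Oi ** Gi + Gi ** transpose K))
      = Oi ** GG + Oi ** GG + (N * a) *\<^sub>R (transpose W ** W ** Oi) - Gi ** K ** transpose Gi"
    unfolding mode_dual_def V_def[symmetric] W_def[symmetric] GG_def[symmetric] UU WU' GKG'
    by (simp add: algebra_simps)
  have lhs: "mode_lhs Gi U P N a Oi Oj Ok
      = skw ((transpose V ** V + transpose W ** W) ** Oi ** GG) + skw (Oi ** GG)
        + (N * a) *\<^sub>R skw (transpose W ** W ** Oi) - Gi ** K ** transpose Gi"
    using skw_mult_gram_commute[OF Oi, of Gi]
    by (simp add: mode_lhs_def V_def[symmetric] W_def[symmetric] GG_def[symmetric] K_def
        matrix_add_rdistrib matrix_add_ldistrib[of "transpose W ** W ** Oi"] matrix_scaleR_right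
        skw_add skw_scaleR algebra_simps)
  show ?thesis
    unfolding K_def[symmetric] dual lhs VW by (simp only: skw_add skw_diff skw_scaleR GKG matrix_mul_lid)
qed

section \<open>Skew triples, vertical vectors and the system operator\<close>

definition skew_triples :: "((real^'r1::finite^'r1) \<times> (real^'r2::finite^'r2) \<times> (real^'r3::finite^'r3)) set" where
  "skew_triples = {(O1, O2, O3). skew_mat O1 \<and> skew_mat O2 \<and> skew_mat O3}"

definition skw3 ::
  "(real^'r1::finite^'r1) \<times> (real^'r2::finite^'r2) \<times> (real^'r3::finite^'r3)
   \<Rightarrow> (real^'r1^'r1) \<times> (real^'r2^'r2) \<times> (real^'r3^'r3)" where
  "skw3 A = (case A of (A1, A2, A3) \<Rightarrow> (skw A1, skw A2, skw A3))"

lemma skew_triples_eq_range_skw3: "skew_triples = range skw3"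
proof
  show "skew_triples \<subseteq> range skw3"
  proof
    fix Om assume "Om \<in> skew_triples"
    then have "skw3 Om = Om"
      by (auto simp: skew_triples_def skw3_def skw_eq_self)
    then show "Om \<in> range skw3" by (metis rangeI)
  qed
  show "range skw3 \<subseteq> skew_triples"
    by (auto simp: skew_triples_def skw3_def skew_mat_skw split: prod.splits)
qed

lemma linear_skw3: "linear skw3"
  by (rule linearI) (auto simp: skw3_def skw_add skw_scaleR split: prod.splits)

lemma subspace_skew_triples: "subspace skew_triples"
  by (simp add: skew_triples_eq_range_skw3 linear_subspace_image[OF linear_skw3] subspace_UNIV)

lemma inner_skw3: "Om \<in> skew_triples \<Longrightarrow> Om \<bullet> A = Om \<bullet> skw3 A"
  by (auto simp: skew_triples_def skw3_def inner_Pair inner_skew_skw[symmetric] split: prod.splits)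

definition vertical_vec ::
  "('r1::finite,'r2::finite,'r3::finite) tensor3 \<times> (real^'r1^'n1::finite) \<times> (real^'r2^'n2::finite) \<times> (real^'r3^'n3::finite)
   \<Rightarrow> (real^'r1^'r1) \<times> (real^'r2^'r2) \<times> (real^'r3^'r3)
   \<Rightarrow> ('r1,'r2,'r3) tensor3 \<times> (real^'r1^'n1) \<times> (real^'r2^'n2) \<times> (real^'r3^'n3)" where
  "vertical_vec X Om = (case X of (G, U1, U2, U3) \<Rightarrow> case Om of (O1, O2, O3) \<Rightarrow>
     ((\<lambda>a b c. - (mprod1 G O1 a b c + mprod2 G O2 a b c + mprod3 G O3 a b c)),
      U1 ** O1, U2 ** O2, U3 ** O3))"

lemma vertical_space_eq_image: "vertical_space X = vertical_vec X ` skew_triples"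
  by (auto simp: vertical_space_def vertical_vec_def skew_triples_def image_def split: prod.splits)

lemma orthonormal_mult_skew_tangent:
  assumes "transpose U ** U = mat 1" and "skew_mat Om"
  shows "transpose U ** (U ** Om) + transpose (U ** Om) ** U = 0"
proof -
  have "transpose (U ** Om) ** U = transpose Om ** (transpose U ** U)"
    by (simp add: matrix_transpose_mul matrix_mul_assoc)
  then show ?thesis
    using assms by (simp add: matrix_mul_assoc skew_mat_def)
qed

lemma vertical_vec_mem_tangent_space:
  assumes "in_Mr X" and "Om \<in> skew_triples"
  shows "vertical_vec X Om \<in> tangent_space X"
  using assms
  by (auto simp: in_Mr_def skew_triples_def tangent_space_def vertical_vec_def
      orthonormal_mult_skew_tangent split: prod.splits)

definition metric_dual ::
  "(real^'k1::finite^'n1) \<times> (real^'k2::finite^'n2) \<times> (real^'k3::finite^'n3) \<Rightarrow> real \<times> real \<times> real \<Rightarrow>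
   ('r1::finite,'r2::finite,'r3::finite) tensor3 \<times> (real^'r1^'n1::finite) \<times> (real^'r2^'n2::finite) \<times> (real^'r3^'n3::finite) \<Rightarrow>
   ('r1,'r2,'r3) tensor3 \<times> (real^'r1^'n1) \<times> (real^'r2^'n2) \<times> (real^'r3^'n3) \<Rightarrow>
   (real^'r1^'r1) \<times> (real^'r2^'r2) \<times> (real^'r3^'r3)" where
  "metric_dual P al X xi = (case P of (P1, P2, P3) \<Rightarrow> case al of (a1, a2, a3) \<Rightarrow>
     case X of (G, U1, U2, U3) \<Rightarrow> case xi of (xG, x1, x2, x3) \<Rightarrow>
     let N = real (CARD('n1) * CARD('n2) * CARD('n3)) in
       (mode_dual U1 P1 (N * a1) (unf1 G) x1 (unf1 xG),
        mode_dual U2 P2 (N * a2) (unf2 G) x2 (unf2 xG),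
        mode_dual U3 P3 (N * a3) (unf3 G) x3 (unf3 xG)))"

lemma metric_vertical_vec: "metric P al X (vertical_vec X Om) xi = Om \<bullet> metric_dual P al X xi"
proof -
  obtain P1 P2 P3 a1 a2 a3 G U1 U2 U3 O1 O2 O3 xG x1 x2 x3
    where eqs: "P = (P1, P2, P3)" "al = (a1, a2, a3)" "X = (G, U1, U2, U3)" "Om = (O1, O2, O3)"
      "xi = (xG, x1, x2, x3)"
    by (metis prod.exhaust)
  have "tinner (\<lambda>a b c. - (mprod1 G O1 a b c + mprod2 G O2 a b c + mprod3 G O3 a b c)) xG
     = - (O1 \<bullet> (unf1 xG ** transpose (unf1 G)) + O2 \<bullet> (unf2 xG ** transpose (unf2 G))
          + O3 \<bullet> (unf3 xG ** transpose (unf3 G)))"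
    by (simp only: tinner_uminus_left tinner_add_left tinner_mprod1 tinner_mprod2 tinner_mprod3)
  then show ?thesis
    by (simp add: eqs metric_def metric_dual_def vertical_vec_def Let_def frob_eq_inner inner_Pair
        inner_mode_dual[symmetric])
qed

lemma metric_dual_tdiff:
  "metric_dual P al X (tdiff u w) = metric_dual P al X u - metric_dual P al X w"
  by (auto simp: metric_dual_def tdiff_def Let_def unf1_diff unf2_diff unf3_diff mode_dual_diff
      split: prod.splits)

definition sys_lhs ::
  "(real^'k1::finite^'n1) \<times> (real^'k2::finite^'n2) \<times> (real^'k3::finite^'n3) \<Rightarrow> real \<times> real \<times> real \<Rightarrow>
   ('r1::finite,'r2::finite,'r3::finite) tensor3 \<times> (real^'r1^'n1::finite) \<times> (real^'r2^'n2::finite) \<times> (real^'r3^'n3::finite) \<Rightarrow>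
   (real^'r1^'r1) \<times> (real^'r2^'r2) \<times> (real^'r3^'r3) \<Rightarrow> (real^'r1^'r1) \<times> (real^'r2^'r2) \<times> (real^'r3^'r3)" where
  "sys_lhs P al X Om = (case P of (P1, P2, P3) \<Rightarrow> case al of (a1, a2, a3) \<Rightarrow>
     case X of (G, U1, U2, U3) \<Rightarrow> case Om of (O1, O2, O3) \<Rightarrow>
     let N = real (CARD('n1) * CARD('n2) * CARD('n3)) in
       (mode_lhs (unf1 G) U1 P1 N a1 O1 O3 O2,
        mode_lhs (unf2 G) U2 P2 N a2 O2 O3 O1,
        mode_lhs (unf3 G) U3 P3 N a3 O3 O2 O1))"

definition sys_rhs ::
  "(real^'k1::finite^'n1) \<times> (real^'k2::finite^'n2) \<times> (real^'k3::finite^'n3) \<Rightarrow> real \<times> real \<times> real \<Rightarrow>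
   ('r1::finite,'r2::finite,'r3::finite) tensor3 \<times> (real^'r1^'n1::finite) \<times> (real^'r2^'n2::finite) \<times> (real^'r3^'n3::finite) \<Rightarrow>
   ('r1,'r2,'r3) tensor3 \<times> (real^'r1^'n1) \<times> (real^'r2^'n2) \<times> (real^'r3^'n3) \<Rightarrow>
   (real^'r1^'r1) \<times> (real^'r2^'r2) \<times> (real^'r3^'r3)" where
  "sys_rhs P al X eta = (case P of (P1, P2, P3) \<Rightarrow> case al of (a1, a2, a3) \<Rightarrow>
     case X of (G, U1, U2, U3) \<Rightarrow> case eta of (eG, e1, e2, e3) \<Rightarrow>
     let N = real (CARD('n1) * CARD('n2) * CARD('n3)) in
       (mode_rhs (unf1 G) U1 P1 e1 (unf1 eG) N a1,
        mode_rhs (unf2 G) U2 P2 e2 (unf2 eG) N a2,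
        mode_rhs (unf3 G) U3 P3 e3 (unf3 eG) N a3))"

lemma lin_system_iff:
  "lin_system P al X eta O1 O2 O3 \<longleftrightarrow>
     (O1, O2, O3) \<in> skew_triples \<and> sys_lhs P al X (O1, O2, O3) = sys_rhs P al X eta"
  by (auto simp: lin_system_def sys_lhs_def sys_rhs_def skew_triples_def Let_def
      sys_eq_iff_mode_lhs_eq_mode_rhs split: prod.splits)

lemma mode_lhs_add:
  "mode_lhs Gi U P N a (Oi + Oi') (Oj + Oj') (Ok + Ok')
     = mode_lhs Gi U P N a Oi Oj Ok + mode_lhs Gi U P N a Oi' Oj' Ok'"
  unfolding mode_lhs_def
  by (simp only: matrix_add_ldistrib matrix_add_rdistrib skw_add kron_add_left kron_add_right)
     (simp add: algebra_simps)

lemma mode_lhs_scaleR: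
  "mode_lhs Gi U P N a (k *\<^sub>R Oi) (k *\<^sub>R Oj) (k *\<^sub>R Ok) = k *\<^sub>R mode_lhs Gi U P N a Oi Oj Ok"
  unfolding mode_lhs_def
  by (simp only: matrix_add_ldistrib matrix_add_rdistrib matrix_scaleR_left matrix_scaleR_right skw_add
      skw_scaleR kron_scaleR_left kron_scaleR_right scaleR_add_right scaleR_diff_right)
     (simp add: algebra_simps)

lemma linear_sys_lhs: "linear (sys_lhs P al X)"
  by (rule linearI)
     (auto simp: sys_lhs_def Let_def mode_lhs_add mode_lhs_scaleR split: prod.splits)

lemma unf_vertical_tensor:
  fixes G :: "('r1::finite,'r2::finite,'r3::finite) tensor3"
    and O1 :: "real^'r1^'r1" and O2 :: "real^'r2^'r2" and O3 :: "real^'r3^'r3"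
  defines "T \<equiv> \<lambda>a b c. - (mprod1 G O1 a b c + mprod2 G O2 a b c + mprod3 G O3 a b c)"
  shows "unf1 T = - (O1 ** unf1 G + unf1 G ** transpose (kron (mat 1) O2 + kron O3 (mat 1)))"
    and "unf2 T = - (O2 ** unf2 G + unf2 G ** transpose (kron (mat 1) O1 + kron O3 (mat 1)))"
    and "unf3 T = - (O3 ** unf3 G + unf3 G ** transpose (kron (mat 1) O1 + kron O2 (mat 1)))"
  unfolding T_def
  by (simp_all only: unf1_uminus unf2_uminus unf3_uminus unf1_add unf2_add unf3_add
      unf1_mprod1 unf1_mprod2 unf1_mprod3 unf2_mprod1 unf2_mprod2 unf2_mprod3
      unf3_mprod1 unf3_mprod2 unf3_mprod3 transpose_add matrix_add_ldistrib)
     (simp_all add: algebra_simps)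

lemma skw3_metric_dual_vertical_vec:
  fixes P1 :: "real^'k1::finite^'n1::finite" and P2 :: "real^'k2::finite^'n2::finite"
    and P3 :: "real^'k3::finite^'n3::finite"
  assumes X: "in_Mr (G, U1, U2, U3)"
    and P: "transpose P1 ** P1 = mat 1" "transpose P2 ** P2 = mat 1" "transpose P3 ** P3 = mat 1"
    and Om: "Om \<in> skew_triples"
  shows "skw3 (metric_dual (P1, P2, P3) al (G, U1, U2, U3) (vertical_vec (G, U1, U2, U3) Om))
         = sys_lhs (P1, P2, P3) al (G, U1, U2, U3) Om"
proof -
  obtain O1 O2 O3 where eq: "Om = (O1, O2, O3)" and s: "skew_mat O1" "skew_mat O2" "skew_mat O3"
    using Om by (auto simp: skew_triples_def)
  have U: "transpose U1 ** U1 = mat 1" "transpose U2 ** U2 = mat 1" "transpose U3 ** U3 = mat 1"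
    using X by (simp_all add: in_Mr_def)
  obtain a1 a2 a3 where al: "al = (a1, a2, a3)"
    by (metis prod.exhaust)
  show ?thesis
    unfolding eq al metric_dual_def sys_lhs_def vertical_vec_def skw3_def Let_def prod.case
      unf_vertical_tensor
    by (simp only: skw_mode_dual_vertical[OF U(1) P(1) s(1) s(3) s(2)]
        skw_mode_dual_vertical[OF U(2) P(2) s(2) s(3) s(1)]
        skw_mode_dual_vertical[OF U(3) P(3) s(3) s(2) s(1)])
qed

lemma skw3_metric_dual_eq_sys_rhs: "skw3 (metric_dual P al X eta) = sys_rhs P al X eta"
  by (auto simp: metric_dual_def sys_rhs_def skw3_def Let_def skw_mode_dual_eq_mode_rhs split: prod.splits)

section \<open>Definiteness of the metric\<close>

lemma full_rank_mult_eq_0: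
  fixes x :: "real^'r::finite^'n::finite" and Gi :: "real^'c::finite^'r"
  assumes "rank Gi = CARD('r)" and "x ** Gi = 0"
  shows "x = 0"
proof -
  have inj: "inj ((*v) (transpose Gi))"
    using assms(1) by (simp add: full_rank_injective[symmetric] rank_transpose)
  have "transpose Gi *v (x $ n) = transpose Gi *v 0" for n
  proof -
    have "transpose Gi *v (x $ n) = (x ** Gi) $ n"
      by (simp add: vec_eq_iff matrix_matrix_mult_def matrix_vector_mult_def transpose_def mult.commute)
    then show ?thesis using assms(2) by simp
  qed
  then have "x $ n = 0" for n
    using inj by (metis injD)
  then show ?thesis
    by (simp add: vec_eq_iff)
qed

lemma inner_mult_gram:
  fixes x :: "real^'r::finite^'n::finite" and Gi :: "real^'c::finite^'r"
  shows "x \<bullet> (x ** (Gi ** transpose Gi)) = (x ** Gi) \<bullet> (x ** Gi)"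
proof -
  have "x \<bullet> (x ** (Gi ** transpose Gi)) = (x ** Gi ** transpose Gi) \<bullet> x"
    by (subst inner_commute) (simp only: matrix_mul_assoc)
  also have "\<dots> = (x ** Gi) \<bullet> (x ** Gi)"
    by (simp only: inner_matrix_mult_right transpose_transpose)
  finally show ?thesis .
qed

lemma inner_orthogonal_complement:
  fixes P :: "real^'k::finite^'n::finite" and x :: "real^'r::finite^'n"
  assumes "transpose P ** P = mat 1"
  shows "x \<bullet> ((mat 1 - P ** transpose P) ** x)
         = ((mat 1 - P ** transpose P) ** x) \<bullet> ((mat 1 - P ** transpose P) ** x)"
proof -
  have T: "transpose (mat 1 - P ** transpose P) = mat 1 - P ** transpose P"
    by (simp add: transpose_diff matrix_transpose_mul)
  have "P ** transpose P ** (P ** transpose P) = P ** transpose P"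
    by (simp add: matrix_mul_assoc matrix_mul_cancel_orthonormal[OF assms])
  then have "transpose (mat 1 - P ** transpose P) ** (mat 1 - P ** transpose P) = mat 1 - P ** transpose P"
    by (simp add: T matrix_diff_ldistrib matrix_diff_rdistrib)
  then show ?thesis
    by (simp add: inner_matrix_mult_left matrix_mul_assoc)
qed

lemma tinner_self_eq_0: "tinner S S = 0 \<Longrightarrow> S = (\<lambda>a b c. 0)"
  by (auto simp: tinner_eq_inner_unf1 unf1_def vec_eq_iff fun_eq_iff)

definition metric_definite ::
  "(real^'k1::finite^'n1) \<times> (real^'k2::finite^'n2) \<times> (real^'k3::finite^'n3) \<Rightarrow> real \<times> real \<times> real \<Rightarrow>
   ('r1::finite,'r2::finite,'r3::finite) tensor3 \<times> (real^'r1^'n1::finite) \<times> (real^'r2^'n2::finite) \<times> (real^'r3^'n3::finite)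
   \<Rightarrow> bool" where
  "metric_definite P al X \<longleftrightarrow>
     (\<forall>q. metric P al X q q = 0 \<longrightarrow> q = ((\<lambda>a b c. 0), 0, 0, 0))"

lemma metric_definiteI:
  fixes G :: "('r1::finite,'r2::finite,'r3::finite) tensor3"
    and U1 :: "real^'r1^'n1::finite" and U2 :: "real^'r2^'n2::finite" and U3 :: "real^'r3^'n3::finite"
    and P1 :: "real^'k1::finite^'n1" and P2 :: "real^'k2::finite^'n2" and P3 :: "real^'k3::finite^'n3"
  assumes X: "in_Mr (G, U1, U2, U3)"
    and P: "transpose P1 ** P1 = mat 1" "transpose P2 ** P2 = mat 1" "transpose P3 ** P3 = mat 1"
    and a: "a1 > 0" "a2 > 0" "a3 > 0"
  shows "metric_definite (P1, P2, P3) (a1, a2, a3) (G, U1, U2, U3)"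
  unfolding metric_definite_def
proof (intro allI impI)
  fix q assume q0: "metric (P1, P2, P3) (a1, a2, a3) (G, U1, U2, U3) q q = 0"
  obtain qG q1 q2 q3 where q: "q = (qG, q1, q2, q3)"
    by (metis prod.exhaust)
  define N where "N = real (CARD('n1) * CARD('n2) * CARD('n3))"
  define R1 where "R1 = (mat 1 - P1 ** transpose P1) ** q1"
  define R2 where "R2 = (mat 1 - P2 ** transpose P2) ** q2"
  define R3 where "R3 = (mat 1 - P3 ** transpose P3) ** q3"
  have "(q1 ** unf1 G) \<bullet> (q1 ** unf1 G) + (q2 ** unf2 G) \<bullet> (q2 ** unf2 G) + (q3 ** unf3 G) \<bullet> (q3 ** unf3 G)
     + tinner qG qG + N * a1 * (R1 \<bullet> R1) + N * a2 * (R2 \<bullet> R2) + N * a3 * (R3 \<bullet> R3) = 0"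
    using q0 unfolding q metric_def Let_def N_def[symmetric] R1_def R2_def R3_def
    by (simp add: frob_eq_inner inner_mult_gram inner_orthogonal_complement[OF P(1)]
        inner_orthogonal_complement[OF P(2)] inner_orthogonal_complement[OF P(3)])
  moreover have "0 \<le> N * a1 * (R1 \<bullet> R1)" "0 \<le> N * a2 * (R2 \<bullet> R2)" "0 \<le> N * a3 * (R3 \<bullet> R3)"
    using a by (simp_all add: N_def)
  moreover have "0 \<le> tinner qG qG"
    by (simp add: tinner_eq_inner_unf1)
  moreover note inner_ge_zero[of "q1 ** unf1 G"] inner_ge_zero[of "q2 ** unf2 G"]
    inner_ge_zero[of "q3 ** unf3 G"]
  ultimately have "(q1 ** unf1 G) \<bullet> (q1 ** unf1 G) = 0" "(q2 ** unf2 G) \<bullet> (q2 ** unf2 G) = 0"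
    "(q3 ** unf3 G) \<bullet> (q3 ** unf3 G) = 0" "tinner qG qG = 0"
    by linarith+
  moreover have "rank (unf1 G) = CARD('r1)" "rank (unf2 G) = CARD('r2)" "rank (unf3 G) = CARD('r3)"
    using X by (simp_all add: in_Mr_def)
  ultimately show "q = ((\<lambda>a b c. 0), 0, 0, 0)"
    by (simp add: q tinner_self_eq_0 full_rank_mult_eq_0)
qed

section \<open>Unique solvability and the horizontal projection\<close>

lemma orthonormal_mult_eq_0:
  fixes U :: "real^'r::finite^'n::finite" and A :: "real^'c::finite^'r"
  assumes "transpose U ** U = mat 1" and "U ** A = 0"
  shows "A = 0"
proof -
  have "A = transpose U ** (U ** A)"
    by (simp add: matrix_mul_assoc assms(1))
  also have "\<dots> = transpose U ** 0"
    by (simp only: assms(2))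
  also have "\<dots> = 0"
    by (simp add: vec_eq_iff matrix_matrix_mult_def)
  finally show ?thesis .
qed

lemma sys_lhs_eq_0_imp:
  fixes P1 :: "real^'k1::finite^'n1::finite" and P2 :: "real^'k2::finite^'n2::finite"
    and P3 :: "real^'k3::finite^'n3::finite"
  assumes X: "in_Mr (G, U1, U2, U3)"
    and P: "transpose P1 ** P1 = mat 1" "transpose P2 ** P2 = mat 1" "transpose P3 ** P3 = mat 1"
    and definite: "metric_definite (P1, P2, P3) al (G, U1, U2, U3)"
    and Om: "Om \<in> skew_triples" and zero: "sys_lhs (P1, P2, P3) al (G, U1, U2, U3) Om = 0"
  shows "Om = 0"
proof -
  let ?v = "vertical_vec (G, U1, U2, U3) Om"
  have "metric (P1, P2, P3) al (G, U1, U2, U3) ?v ?v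
      = Om \<bullet> skw3 (metric_dual (P1, P2, P3) al (G, U1, U2, U3) ?v)"
    unfolding metric_vertical_vec by (rule inner_skw3[OF Om])
  also have "\<dots> = 0"
    by (simp add: skw3_metric_dual_vertical_vec[OF X P Om] zero)
  finally have "?v = ((\<lambda>a b c. 0), 0, 0, 0)"
    using definite unfolding metric_definite_def by blast
  moreover obtain O1 O2 O3 where "Om = (O1, O2, O3)"
    by (metis prod.exhaust)
  moreover have "transpose U1 ** U1 = mat 1" "transpose U2 ** U2 = mat 1" "transpose U3 ** U3 = mat 1"
    using X by (simp_all add: in_Mr_def)
  ultimately show ?thesis
    by (simp add: vertical_vec_def orthonormal_mult_eq_0 zero_prod_def)
qed

lemma sys_lhs_bij_betw:
  fixes P1 :: "real^'k1::finite^'n1::finite" and P2 :: "real^'k2::finite^'n2::finite"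
    and P3 :: "real^'k3::finite^'n3::finite"
  assumes X: "in_Mr (G, U1, U2, U3)"
    and P: "transpose P1 ** P1 = mat 1" "transpose P2 ** P2 = mat 1" "transpose P3 ** P3 = mat 1"
    and definite: "metric_definite (P1, P2, P3) al (G, U1, U2, U3)"
  shows "bij_betw (sys_lhs (P1, P2, P3) al (G, U1, U2, U3)) skew_triples skew_triples"
proof -
  let ?L = "sys_lhs (P1, P2, P3) al (G, U1, U2, U3)"
  have inj: "inj_on ?L skew_triples"
    using sys_lhs_eq_0_imp[OF X P definite]
    by (simp add: linear_inj_on_iff_eq_0[OF linear_sys_lhs subspace_skew_triples])
  have "?L Om \<in> skew_triples" if "Om \<in> skew_triples" for Om
    unfolding skw3_metric_dual_vertical_vec[OF X P that, symmetric] skew_triples_eq_range_skw3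
    by (rule rangeI)
  then have "?L ` skew_triples = skew_triples"
    using inj by (intro linear_inj_on_subspace_imp_surj_on[OF linear_sys_lhs subspace_skew_triples]) auto
  with inj show ?thesis
    by (simp add: bij_betw_def)
qed

lemma sys_unique_solution:
  fixes P1 :: "real^'k1::finite^'n1::finite" and P2 :: "real^'k2::finite^'n2::finite"
    and P3 :: "real^'k3::finite^'n3::finite"
  assumes X: "in_Mr (G, U1, U2, U3)"
    and P: "transpose P1 ** P1 = mat 1" "transpose P2 ** P2 = mat 1" "transpose P3 ** P3 = mat 1"
    and definite: "metric_definite (P1, P2, P3) al (G, U1, U2, U3)"
  shows "\<exists>!Om. Om \<in> skew_triples \<and>
           sys_lhs (P1, P2, P3) al (G, U1, U2, U3) Om = sys_rhs (P1, P2, P3) al (G, U1, U2, U3) eta"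
proof -
  let ?L = "sys_lhs (P1, P2, P3) al (G, U1, U2, U3)"
  let ?R = "sys_rhs (P1, P2, P3) al (G, U1, U2, U3) eta"
  have bij: "bij_betw ?L skew_triples skew_triples"
    by (rule sys_lhs_bij_betw[OF X P definite])
  have "?R \<in> skew_triples"
    by (simp add: skw3_metric_dual_eq_sys_rhs[symmetric] skew_triples_eq_range_skw3)
  then have "?R \<in> ?L ` skew_triples"
    by (simp add: bij_betw_imp_surj_on[OF bij])
  then obtain Om where R_eq: "?R = ?L Om" and Om: "Om \<in> skew_triples"
    by (rule imageE)
  have unique: "Om' = Om" if "Om' \<in> skew_triples" "?L Om' = ?R" for Om'
    using inj_onD[OF bij_betw_imp_inj_on[OF bij] _ that(1) Om] that(2) R_eq by simp
  show ?thesis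
  proof (rule ex1I[of _ Om])
    show "Om \<in> skew_triples \<and> ?L Om = ?R"
      using Om R_eq by simp
  qed (use unique in blast)
qed

lemma metric_tdiff_left: "metric P al X (tdiff u w) xi = metric P al X u xi - metric P al X w xi"
  by (cases P, cases al, cases X, cases u, cases w, cases xi)
     (simp add: metric_def tdiff_def Let_def frob_eq_inner inner_diff_left tinner_diff_left algebra_simps)

lemma metric_tdiff_right: "metric P al X xi (tdiff u w) = metric P al X xi u - metric P al X xi w"
  by (cases P, cases al, cases X, cases u, cases w, cases xi)
     (simp add: metric_def tdiff_def Let_def frob_eq_inner inner_diff_right tinner_diff_right
      matrix_diff_ldistrib matrix_diff_rdistrib algebra_simps)

lemma tangent_condition_diff:
  fixes U :: "real^'r::finite^'n::finite"
  assumes "transpose U ** x + transpose x ** U = 0" and "transpose U ** y + transpose y ** U = 0"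
  shows "transpose U ** (x - y) + transpose (x - y) ** U = 0"
proof -
  have "transpose U ** (x - y) + transpose (x - y) ** U
      = (transpose U ** x + transpose x ** U) - (transpose U ** y + transpose y ** U)"
    by (simp add: matrix_diff_ldistrib matrix_diff_rdistrib transpose_diff algebra_simps)
  then show ?thesis
    using assms by simp
qed

lemma tdiff_mem_tangent_space:
  assumes "u \<in> tangent_space X" and "w \<in> tangent_space X"
  shows "tdiff u w \<in> tangent_space X"
  using assms
  by (cases X, cases u, cases w) (simp add: tangent_space_def tdiff_def tangent_condition_diff)

lemma tdiff_mem_horizontal_space:
  assumes "u \<in> horizontal_space P al X" and "w \<in> horizontal_space P al X"
  shows "tdiff u w \<in> horizontal_space P al X"
  using assms by (simp add: horizontal_space_def tdiff_mem_tangent_space metric_tdiff_right)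

lemma tdiff_tdiff: "tdiff (tdiff e q) (tdiff e p) = tdiff p q"
  by (cases e, cases p, cases q) (simp add: tdiff_def fun_eq_iff)

lemma tdiff_cancel: "tdiff u (tdiff u w) = w"
  by (cases u, cases w) (simp add: tdiff_def fun_eq_iff)

lemma horizontal_proj_eqI:
  assumes definite: "metric_definite P al X"
    and p: "p \<in> horizontal_space P al X" and v: "tdiff eta p \<in> vertical_space X"
  shows "horizontal_proj P al X eta = p"
  unfolding horizontal_proj_def
proof (rule the_equality)
  show "p \<in> horizontal_space P al X \<and> (\<forall>xi \<in> horizontal_space P al X. metric P al X (tdiff eta p) xi = 0)"
    using p v by (simp add: horizontal_space_def)
next
  fix p' assume p': "p' \<in> horizontal_space P al X \<and>
    (\<forall>xi \<in> horizontal_space P al X. metric P al X (tdiff eta p') xi = 0)"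
  have q: "tdiff p' p \<in> horizontal_space P al X"
    using p p' by (simp add: tdiff_mem_horizontal_space)
  have "metric P al X (tdiff p' p) (tdiff p' p)
      = metric P al X (tdiff eta p) (tdiff p' p) - metric P al X (tdiff eta p') (tdiff p' p)"
    unfolding tdiff_tdiff[of eta p p', symmetric] by (rule metric_tdiff_left)
  also have "\<dots> = 0"
  proof -
    have "metric P al X (tdiff eta p) (tdiff p' p) = 0"
      using q v unfolding horizontal_space_def by blast
    moreover have "metric P al X (tdiff eta p') (tdiff p' p) = 0"
      using q p' by blast
    ultimately show ?thesis by simp
  qed
  finally have "tdiff p' p = ((\<lambda>a b c. 0), 0, 0, 0)"
    using definite unfolding metric_definite_def by blast
  then show "p' = p"
    by (cases p, cases p') (simp add: tdiff_def fun_eq_iff)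
qed

lemma horizontal_proj_eq_sys_solution:
  fixes P1 :: "real^'k1::finite^'n1::finite" and P2 :: "real^'k2::finite^'n2::finite"
    and P3 :: "real^'k3::finite^'n3::finite"
  assumes X: "in_Mr (G, U1, U2, U3)"
    and P: "transpose P1 ** P1 = mat 1" "transpose P2 ** P2 = mat 1" "transpose P3 ** P3 = mat 1"
    and definite: "metric_definite (P1, P2, P3) al (G, U1, U2, U3)"
    and eta: "eta \<in> tangent_space (G, U1, U2, U3)"
    and Om: "Om \<in> skew_triples"
    and solves: "sys_lhs (P1, P2, P3) al (G, U1, U2, U3) Om = sys_rhs (P1, P2, P3) al (G, U1, U2, U3) eta"
  shows "horizontal_proj (P1, P2, P3) al (G, U1, U2, U3) eta = tdiff eta (vertical_vec (G, U1, U2, U3) Om)"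
proof (rule horizontal_proj_eqI[OF definite])
  let ?v = "vertical_vec (G, U1, U2, U3) Om"
  let ?p = "tdiff eta ?v"
  show "tdiff eta ?p \<in> vertical_space (G, U1, U2, U3)"
    using Om by (simp add: tdiff_cancel vertical_space_eq_image)
  have "?p \<in> tangent_space (G, U1, U2, U3)"
    by (rule tdiff_mem_tangent_space[OF eta vertical_vec_mem_tangent_space[OF X Om]])
  moreover have "metric (P1, P2, P3) al (G, U1, U2, U3) w ?p = 0"
    if w: "w \<in> vertical_space (G, U1, U2, U3)" for w
  proof -
    obtain Q where Q: "Q \<in> skew_triples" "w = vertical_vec (G, U1, U2, U3) Q"
      using w unfolding vertical_space_eq_image by blast
    have "metric (P1, P2, P3) al (G, U1, U2, U3) w ?p
        = Q \<bullet> skw3 (metric_dual (P1, P2, P3) al (G, U1, U2, U3) ?p)"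
      unfolding Q(2) metric_vertical_vec by (rule inner_skw3[OF Q(1)])
    also have "\<dots> = Q \<bullet> (sys_rhs (P1, P2, P3) al (G, U1, U2, U3) eta
        - sys_lhs (P1, P2, P3) al (G, U1, U2, U3) Om)"
      by (simp only: metric_dual_tdiff linear_diff[OF linear_skw3]
          skw3_metric_dual_eq_sys_rhs[where eta = eta] skw3_metric_dual_vertical_vec[OF X P Om])
    finally show ?thesis
      by (simp add: solves)
  qed
  ultimately show "?p \<in> horizontal_space (P1, P2, P3) al (G, U1, U2, U3)"
    by (simp add: horizontal_space_def)
qed

theorem proposition7:
  fixes G :: "('r1::finite,'r2::finite,'r3::finite) tensor3"
    and U1 :: "(real^'r1^'n1::finite)" and U2 :: "(real^'r2^'n2::finite)" and U3 :: "(real^'r3^'n3::finite)"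
    and P1 :: "(real^'k1::finite^'n1)" and P2 :: "(real^'k2::finite^'n2)" and P3 :: "(real^'k3::finite^'n3)"
    and a1 a2 a3 :: real
    and eG :: "('r1,'r2,'r3) tensor3"
    and e1 :: "(real^'r1^'n1)" and e2 :: "(real^'r2^'n2)" and e3 :: "(real^'r3^'n3)"
  assumes "CARD('r1) \<le> CARD('n1)" and "CARD('r2) \<le> CARD('n2)" and "CARD('r3) \<le> CARD('n3)"
    and "CARD('r1) \<le> CARD('k1)" and "CARD('r2) \<le> CARD('k2)" and "CARD('r3) \<le> CARD('k3)"
    and "a1 > 0" and "a2 > 0" and "a3 > 0"
    and "transpose P1 ** P1 = mat 1" and "transpose P2 ** P2 = mat 1" and "transpose P3 ** P3 = mat 1"
    and "in_Mr (G, U1, U2, U3)"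
    and "(eG, e1, e2, e3) \<in> tangent_space (G, U1, U2, U3)"
  shows "(\<exists>!(O1, O2, O3).
            lin_system (P1, P2, P3) (a1, a2, a3) (G, U1, U2, U3) (eG, e1, e2, e3) O1 O2 O3)
       \<and> (\<forall>O1 O2 O3.
            lin_system (P1, P2, P3) (a1, a2, a3) (G, U1, U2, U3) (eG, e1, e2, e3) O1 O2 O3 \<longrightarrow>
            horizontal_proj (P1, P2, P3) (a1, a2, a3) (G, U1, U2, U3) (eG, e1, e2, e3) =
              ((\<lambda>a b c. eG a b c + (mprod1 G O1 a b c + mprod2 G O2 a b c + mprod3 G O3 a b c)),
               e1 - U1 ** O1, e2 - U2 ** O2, e3 - U3 ** O3))"
proof -
  note X = assms(13) and P = assms(10-12) and eta = assms(14)
  have definite: "metric_definite (P1, P2, P3) (a1, a2, a3) (G, U1, U2, U3)"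
    by (rule metric_definiteI[OF X P assms(7-9)])
  show ?thesis
  proof (intro conjI allI impI)
    show "\<exists>!(O1, O2, O3). lin_system (P1, P2, P3) (a1, a2, a3) (G, U1, U2, U3) (eG, e1, e2, e3) O1 O2 O3"
      using sys_unique_solution[OF X P definite, of "(eG, e1, e2, e3)"]
      by (simp add: lin_system_iff case_prod_unfold)
  next
    fix O1 O2 O3
    assume "lin_system (P1, P2, P3) (a1, a2, a3) (G, U1, U2, U3) (eG, e1, e2, e3) O1 O2 O3"
    then have "(O1, O2, O3) \<in> skew_triples"
      and "sys_lhs (P1, P2, P3) (a1, a2, a3) (G, U1, U2, U3) (O1, O2, O3)
        = sys_rhs (P1, P2, P3) (a1, a2, a3) (G, U1, U2, U3) (eG, e1, e2, e3)"
      by (simp_all add: lin_system_iff)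
    then show "horizontal_proj (P1, P2, P3) (a1, a2, a3) (G, U1, U2, U3) (eG, e1, e2, e3) =
              ((\<lambda>a b c. eG a b c + (mprod1 G O1 a b c + mprod2 G O2 a b c + mprod3 G O3 a b c)),
               e1 - U1 ** O1, e2 - U2 ** O2, e3 - U3 ** O3)"
      by (simp add: horizontal_proj_eq_sys_solution[OF X P definite eta] tdiff_def vertical_vec_def
          fun_eq_iff)
  qed
qed

end
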